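(* Let $G$ be a graph and let $S\subseteq V(G)$ be a twin cover of $G$. Then there exists an imbalance optimal ordering of $G$ in which, for every connected component $C$ of $G-S$, the vertices of $C$ appear consecutively.
   Context: All graphs are finite, simple and undirected. An ordering $\sigma$ of $V(G)$ assigns to each vertex $v$ the sets $N_L(v,\sigma)$ and $N_R(v,\sigma)$ of neighbours of $v$ preceding and following $v$, respectively; $\mathcal{I}(v,\sigma)=\big||N_L(v,\sigma)|-|N_R(v,\sigma)|\big|$, $\mathcal{I}(\sigma)=\sum_v\mathcal{I}(v,\sigma)$, $\mathcal{I}(G)=\min_\sigma\mathcal{I}(\sigma)$, and $\sigma$ is imbalance optimal if $\mathcal{I}(\sigma)=\mathcal{I}(G)$. A twin cover of $G$ is a set $S\subseteq V(G)$ such that every connected component $X$ of $G-S$ is a set of true twins in $G$ ($N[u]=N[v]$ for all $u,v\in X$). *)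

theory Defs
  imports Main
begin

definition graph :: "'a set \<Rightarrow> ('a \<Rightarrow> 'a \<Rightarrow> bool) \<Rightarrow> bool" where
  "graph V E \<longleftrightarrow> finite V \<and> (\<forall>u v. E u v \<longrightarrow> u \<in> V \<and> v \<in> V)
     \<and> (\<forall>u v. E u v \<longrightarrow> E v u) \<and> (\<forall>v. \<not> E v v)"

definition is_ordering :: "'a set \<Rightarrow> 'a list \<Rightarrow> bool" where
  "is_ordering V \<sigma> \<longleftrightarrow> distinct \<sigma> \<and> set \<sigma> = V"

definition precedes :: "'a list \<Rightarrow> 'a \<Rightarrow> 'a \<Rightarrow> bool" where
  "precedes \<sigma> u v \<longleftrightarrow> (\<exists>i j. i < j \<and> j < length \<sigma> \<and> \<sigma> ! i = u \<and> \<sigma> ! j = v)"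

definition left_nbrs :: "('a \<Rightarrow> 'a \<Rightarrow> bool) \<Rightarrow> 'a list \<Rightarrow> 'a \<Rightarrow> 'a set" where
  "left_nbrs E \<sigma> v = {u \<in> set \<sigma>. E v u \<and> precedes \<sigma> u v}"

definition right_nbrs :: "('a \<Rightarrow> 'a \<Rightarrow> bool) \<Rightarrow> 'a list \<Rightarrow> 'a \<Rightarrow> 'a set" where
  "right_nbrs E \<sigma> v = {u \<in> set \<sigma>. E v u \<and> precedes \<sigma> v u}"

definition vertex_imbalance :: "('a \<Rightarrow> 'a \<Rightarrow> bool) \<Rightarrow> 'a list \<Rightarrow> 'a \<Rightarrow> nat" where
  "vertex_imbalance E \<sigma> v =
     nat \<bar>int (card (left_nbrs E \<sigma> v)) - int (card (right_nbrs E \<sigma> v))\<bar>"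

definition ordering_imbalance :: "('a \<Rightarrow> 'a \<Rightarrow> bool) \<Rightarrow> 'a list \<Rightarrow> nat" where
  "ordering_imbalance E \<sigma> = (\<Sum>v\<in>set \<sigma>. vertex_imbalance E \<sigma> v)"

definition graph_imbalance :: "'a set \<Rightarrow> ('a \<Rightarrow> 'a \<Rightarrow> bool) \<Rightarrow> nat" where
  "graph_imbalance V E = Min {ordering_imbalance E \<sigma> | \<sigma>. is_ordering V \<sigma>}"

definition imbalance_optimal :: "'a set \<Rightarrow> ('a \<Rightarrow> 'a \<Rightarrow> bool) \<Rightarrow> 'a list \<Rightarrow> bool" where
  "imbalance_optimal V E \<sigma> \<longleftrightarrow> is_ordering V \<sigma> \<and> ordering_imbalance E \<sigma> = graph_imbalance V E"

definition component_of :: "'a set \<Rightarrow> ('a \<Rightarrow> 'a \<Rightarrow> bool) \<Rightarrow> 'a set \<Rightarrow> bool" where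
  "component_of W E C \<longleftrightarrow> (\<exists>v\<in>W. C = {w. (\<lambda>x y. x \<in> W \<and> y \<in> W \<and> E x y)\<^sup>*\<^sup>* v w})"

definition closed_nbhd :: "'a set \<Rightarrow> ('a \<Rightarrow> 'a \<Rightarrow> bool) \<Rightarrow> 'a \<Rightarrow> 'a set" where
  "closed_nbhd V E v = insert v {u \<in> V. E v u}"

definition twin_cover :: "'a set \<Rightarrow> ('a \<Rightarrow> 'a \<Rightarrow> bool) \<Rightarrow> 'a set \<Rightarrow> bool" where
  "twin_cover V E S \<longleftrightarrow> S \<subseteq> V \<and>
     (\<forall>X. component_of (V - S) E X \<longrightarrow> (\<forall>u\<in>X. \<forall>v\<in>X. closed_nbhd V E u = closed_nbhd V E v))"

definition consecutive_in :: "'a list \<Rightarrow> 'a set \<Rightarrow> bool" where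
  "consecutive_in \<sigma> C \<longleftrightarrow> (\<exists>xs ys zs. \<sigma> = xs @ ys @ zs \<and> set ys = C)"

end

theory Submission
  imports Defs
begin

text \<open>
  Let X be a component of G - S; it is a set of true twins. Call a vertex outside X that lies
  between two vertices of X a gap vertex, let v be the first one and R the block of X just before
  it. If every neighbour of v in R has at least two more neighbours on its right than on its left,
  moving v in front of R does not increase the imbalance. Otherwise some neighbour x of v in R has
  signed imbalance at least -1. Every vertex y of the last block of X lies beyond v, and as a true
  twin of x that also sees x and v on its left, y has signed imbalance at least 3; so the vertex
  just before the last block can be moved behind it. Either move removes a gap vertex and keeps
  the vertices outside X in order, so finitely many moves make X consecutive.

  The block of X is then slid left until it follows a vertex of S (or starts the ordering). The
  vertices it passes lie outside S and X, hence are not adjacent to X, so the imbalance does not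
  change; and a block inserted right behind a vertex of S cannot split any other component.
  Treating the components one at a time, starting from an optimal ordering, proves the theorem.
\<close>

section \<open>Positions and blocks in an ordering\<close>

lemma precedes_Nil [simp]: "\<not> precedes [] a b"
  unfolding precedes_def by simp

lemma precedes_Cons: "precedes (c # s) a b \<longleftrightarrow> (c = a \<and> b \<in> set s) \<or> precedes s a b"
proof
  assume "precedes (c # s) a b"
  then obtain i j where ij: "i < j" "j < Suc (length s)" "(c # s) ! i = a" "(c # s) ! j = b"
    unfolding precedes_def by auto
  then obtain j' where j: "j = Suc j'" by (cases j) auto
  show "(c = a \<and> b \<in> set s) \<or> precedes s a b"
  proof (cases i)
    case 0
    then show ?thesis using ij j by auto
  next
    case (Suc i')
    then show ?thesis using ij j unfolding precedes_def by auto
  qed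
next
  assume "(c = a \<and> b \<in> set s) \<or> precedes s a b"
  then show "precedes (c # s) a b"
  proof
    assume "c = a \<and> b \<in> set s"
    then obtain j where "j < length s" "s ! j = b" "c = a" by (auto simp: in_set_conv_nth)
    then show ?thesis unfolding precedes_def by (intro exI[of _ 0] exI[of _ "Suc j"]) auto
  next
    assume "precedes s a b"
    then obtain i j where "i < j" "j < length s" "s ! i = a" "s ! j = b"
      unfolding precedes_def by blast
    then show ?thesis unfolding precedes_def by (intro exI[of _ "Suc i"] exI[of _ "Suc j"]) auto
  qed
qed

lemma precedes_in_set: "precedes s a b \<Longrightarrow> a \<in> set s \<and> b \<in> set s"
  by (induction s) (auto simp: precedes_Cons)

lemma precedes_append:
  "precedes (xs @ ys) a b \<longleftrightarrow> precedes xs a b \<or> (a \<in> set xs \<and> b \<in> set ys) \<or> precedes ys a b"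
  by (induction xs) (auto simp: precedes_Cons)

lemma precedes_rev: "precedes (rev s) a b \<longleftrightarrow> precedes s b a"
  by (induction s) (auto simp: precedes_append precedes_Cons)

lemma precedes_trans: "distinct s \<Longrightarrow> precedes s a b \<Longrightarrow> precedes s b c \<Longrightarrow> precedes s a c"
  by (induction s) (auto simp: precedes_Cons dest: precedes_in_set)

lemma precedes_split: "precedes s a b \<Longrightarrow> \<exists>P M Q. s = P @ a # M @ b # Q"
proof (induction s)
  case (Cons c s)
  show ?case
  proof (cases "precedes s a b")
    case True
    then obtain P M Q where "s = P @ a # M @ b # Q" using Cons.IH by blast
    then show ?thesis by (metis append_Cons)
  next
    case False
    then have "c = a" "b \<in> set s" using Cons.prems by (auto simp: precedes_Cons)
    then show ?thesis by (metis append_Nil split_list)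
  qed
qed simp

lemma precedes_between:
  assumes "distinct (P @ a # M @ b # Q)"
    and "precedes (P @ a # M @ b # Q) a v" and "precedes (P @ a # M @ b # Q) v b"
  shows "v \<in> set M"
  using assms by (auto simp: precedes_append precedes_Cons dest: precedes_in_set)

lemma left_nbrs_split:
  "distinct (L @ v # R) \<Longrightarrow> left_nbrs E (L @ v # R) v = {u \<in> set L. E v u}"
  unfolding left_nbrs_def by (auto simp: precedes_append precedes_Cons dest: precedes_in_set)

lemma right_nbrs_split:
  "distinct (L @ v # R) \<Longrightarrow> right_nbrs E (L @ v # R) v = {u \<in> set R. E v u}"
  unfolding right_nbrs_def by (auto simp: precedes_append precedes_Cons dest: precedes_in_set)

lemma split_after_last_member:
  "\<exists>xs' ys. xs = xs' @ ys \<and> set ys \<inter> S = {} \<and> (xs' \<noteq> [] \<longrightarrow> last xs' \<in> S)"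
proof (induction xs rule: rev_induct)
  case (snoc x xs)
  then obtain xs' ys where split: "xs = xs' @ ys" "set ys \<inter> S = {}" "xs' \<noteq> [] \<longrightarrow> last xs' \<in> S"
    by blast
  show ?case
  proof (cases "x \<in> S")
    case True
    then show ?thesis by (intro exI[of _ "xs @ [x]"] exI[of _ "[]"]) simp
  next
    case False
    then show ?thesis using split by (intro exI[of _ xs'] exI[of _ "ys @ [x]"]) auto
  qed
qed simp

lemma consecutive_in_filter:
  assumes "consecutive_in s Y" "Y \<inter> X = {}"
  shows "consecutive_in (filter (\<lambda>u. u \<notin> X) s) Y"
proof -
  obtain p b q where "s = p @ b @ q" "set b = Y"
    using assms(1) unfolding consecutive_in_def by auto
  moreover have "filter (\<lambda>u. u \<notin> X) b = b"
    using \<open>set b = Y\<close> assms(2) by (auto simp: filter_id_conv)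
  ultimately have "filter (\<lambda>u. u \<notin> X) s = filter (\<lambda>u. u \<notin> X) p @ b @ filter (\<lambda>u. u \<notin> X) q"
    by simp
  then show ?thesis
    using \<open>set b = Y\<close> unfolding consecutive_in_def by blast
qed

lemma consecutive_in_insert:
  assumes "consecutive_in (L @ R) Y" and "L \<noteq> [] \<Longrightarrow> last L \<notin> Y"
  shows "consecutive_in (L @ M @ R) Y"
proof -
  obtain p b q where pbq: "p @ b @ q = L @ R" and b: "set b = Y"
    using assms(1) unfolding consecutive_in_def by auto
  obtain us where "(p = L @ us \<and> R = us @ b @ q) \<or> (L = p @ us \<and> us @ R = b @ q)"
    using pbq by (auto simp: append_eq_append_conv2)
  then show ?thesis
  proof
    assume "p = L @ us \<and> R = us @ b @ q"
    then have "L @ M @ R = (L @ M @ us) @ b @ q" by simp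
    then show ?thesis unfolding consecutive_in_def using b by blast
  next
    assume L: "L = p @ us \<and> us @ R = b @ q"
    then obtain ws where "(us = b @ ws \<and> q = ws @ R) \<or> (b = us @ ws \<and> R = ws @ q)"
      by (auto simp: append_eq_append_conv2)
    then show ?thesis
    proof
      assume "us = b @ ws \<and> q = ws @ R"
      then have "L @ M @ R = p @ b @ (ws @ M @ R)" using L by simp
      then show ?thesis unfolding consecutive_in_def using b by blast
    next
      assume bR: "b = us @ ws \<and> R = ws @ q"
      have "us = []"
        using assms(2) L bR b by (cases us rule: rev_cases) auto
      then have "L @ M @ R = (p @ M) @ b @ q" using L bR by simp
      then show ?thesis unfolding consecutive_in_def using b by blast
    qed
  qed
qed

section \<open>Signed imbalance and moving a vertex past a block\<close>

definition signed_imbalance :: "('a \<Rightarrow> 'a \<Rightarrow> bool) \<Rightarrow> 'a list \<Rightarrow> 'a \<Rightarrow> int" where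
  "signed_imbalance E s v = int (card (left_nbrs E s v)) - int (card (right_nbrs E s v))"

definition nbr_count :: "('a \<Rightarrow> 'a \<Rightarrow> bool) \<Rightarrow> 'a \<Rightarrow> 'a set \<Rightarrow> nat" where
  "nbr_count E v T = card {u \<in> T. E v u}"

lemma nbr_count_Un:
  "finite A \<Longrightarrow> finite B \<Longrightarrow> A \<inter> B = {} \<Longrightarrow> nbr_count E v (A \<union> B) = nbr_count E v A + nbr_count E v B"
  unfolding nbr_count_def by (subst card_Un_disjoint[symmetric]) (auto intro: arg_cong[where f = card])

lemma nbr_count_insert:
  assumes "finite A" "c \<notin> A"
  shows "nbr_count E v (insert c A) = (if E v c then 1 else 0) + nbr_count E v A"
proof -
  have "{u \<in> insert c A. E v u} = (if E v c then insert c {u \<in> A. E v u} else {u \<in> A. E v u})"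
    by auto
  then show ?thesis
    unfolding nbr_count_def using assms by simp
qed

lemma nbr_count_cong: "\<forall>u\<in>T. E x u \<longleftrightarrow> E y u \<Longrightarrow> nbr_count E x T = nbr_count E y T"
  unfolding nbr_count_def by (metis (mono_tags, lifting) Collect_cong)

lemma signed_imbalance_split:
  "distinct (L @ v # R) \<Longrightarrow>
    signed_imbalance E (L @ v # R) v = int (nbr_count E v (set L)) - int (nbr_count E v (set R))"
  unfolding signed_imbalance_def nbr_count_def by (simp add: left_nbrs_split right_nbrs_split)

lemma signed_imbalance_rev: "signed_imbalance E (rev s) v = - signed_imbalance E s v"
  unfolding signed_imbalance_def left_nbrs_def right_nbrs_def by (simp add: precedes_rev)

lemma ordering_imbalance_eq_sum_abs:
  "int (ordering_imbalance E s) = (\<Sum>v\<in>set s. \<bar>signed_imbalance E s v\<bar>)"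
  unfolding ordering_imbalance_def vertex_imbalance_def signed_imbalance_def by simp

lemma ordering_imbalance_rev: "ordering_imbalance E (rev s) = ordering_imbalance E s"
  using ordering_imbalance_eq_sum_abs[of E "rev s"] ordering_imbalance_eq_sum_abs[of E s]
  by (simp add: signed_imbalance_rev)

lemma ordering_imbalance_swap_nonadjacent:
  assumes "\<forall>p\<in>set P. \<forall>q\<in>set Q. \<not> E p q \<and> \<not> E q p"
  shows "ordering_imbalance E (L @ Q @ P @ R) = ordering_imbalance E (L @ P @ Q @ R)"
proof -
  have "precedes (L @ Q @ P @ R) a b \<longleftrightarrow> precedes (L @ P @ Q @ R) a b"
    if "E a b \<or> E b a" for a b
    using assms that by (auto simp: precedes_append)
  then have "left_nbrs E (L @ Q @ P @ R) u = left_nbrs E (L @ P @ Q @ R) u"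
    "right_nbrs E (L @ Q @ P @ R) u = right_nbrs E (L @ P @ Q @ R) u" for u
    unfolding left_nbrs_def right_nbrs_def by auto
  moreover have "set (L @ Q @ P @ R) = set (L @ P @ Q @ R)" by auto
  ultimately show ?thesis
    unfolding ordering_imbalance_def vertex_imbalance_def by simp
qed

lemma signed_imbalance_move_before_block:
  assumes dist: "distinct (A @ R @ v # B)" and u: "u \<in> set (A @ R @ v # B)"
  shows "signed_imbalance E (A @ v # R @ B) u = signed_imbalance E (A @ R @ v # B) u
      + (if u \<in> set R \<and> E u v then 2 else 0) - (if u = v then 2 * int (nbr_count E v (set R)) else 0)"
proof -
  consider (A) "u \<in> set A" | (R) "u \<in> set R" | (v) "u = v" | (B) "u \<in> set B" using u by auto
  then show ?thesis
  proof cases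
    case A
    then obtain A1 A2 where "A = A1 @ u # A2" by (meson split_list)
    with dist show ?thesis
      using signed_imbalance_split[of A1 u "A2 @ R @ v # B" E]
        signed_imbalance_split[of A1 u "A2 @ v # R @ B" E]
      by (auto simp: Un_ac insert_commute)
  next
    case R
    then obtain R1 R2 where "R = R1 @ u # R2" by (meson split_list)
    with dist show ?thesis
      using signed_imbalance_split[of "A @ R1" u "R2 @ v # B" E]
        signed_imbalance_split[of "A @ v # R1" u "R2 @ B" E]
        nbr_count_insert[of "set (A @ R1)" v E u] nbr_count_insert[of "set (R2 @ B)" v E u]
      by auto
  next
    case v
    with dist show ?thesis
      using signed_imbalance_split[of "A @ R" v B E] signed_imbalance_split[of A v "R @ B" E]
        nbr_count_Un[of "set A" "set R" E v] nbr_count_Un[of "set R" "set B" E v]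
      by (auto simp: Int_Un_distrib)
  next
    case B
    then obtain B1 B2 where "B = B1 @ u # B2" by (meson split_list)
    with dist show ?thesis
      using signed_imbalance_split[of "A @ R @ v # B1" u B2 E]
        signed_imbalance_split[of "A @ v # R @ B1" u B2 E]
      by (auto simp: Un_ac insert_commute)
  qed
qed

lemma ordering_imbalance_move_before_block:
  assumes dist: "distinct (A @ R @ v # B)" and sym: "symp E"
    and heavy: "\<forall>x\<in>set R. E x v \<longrightarrow> signed_imbalance E (A @ R @ v # B) x \<le> -2"
  shows "ordering_imbalance E (A @ v # R @ B) \<le> ordering_imbalance E (A @ R @ v # B)"
proof -
  let ?s = "A @ R @ v # B" and ?t = "A @ v # R @ B"
  \<comment> \<open>the imbalance of each neighbour of v in R drops by 2; this pays for the increase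
    of the imbalance of v, which is at most twice the number of its neighbours in R\<close>
  define h where "h u = (if u \<in> set R \<and> E u v then 2 else (0::int))" for u
  define g where "g u = (if u = v then 2 * int (nbr_count E v (set R)) else 0)" for u
  have pointwise: "\<bar>signed_imbalance E ?t u\<bar> + h u \<le> \<bar>signed_imbalance E ?s u\<bar> + g u"
    if "u \<in> set ?s" for u
  proof -
    have "signed_imbalance E ?t u = signed_imbalance E ?s u + h u - g u"
      using signed_imbalance_move_before_block[OF dist that] unfolding h_def g_def by simp
    moreover have "h u = 0 \<or> (g u = 0 \<and> h u = 2 \<and> signed_imbalance E ?s u \<le> -2)"
      using heavy dist unfolding h_def g_def by auto
    moreover have "g u \<ge> 0" unfolding g_def by simp
    ultimately show ?thesis by auto
  qed
  have "{u \<in> set ?s. u \<in> set R \<and> E u v} = {u \<in> set R. E v u}"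
    using sym by (auto dest: sympD)
  then have "(\<Sum>u\<in>set ?s. h u) = 2 * int (nbr_count E v (set R))"
    unfolding h_def nbr_count_def by (simp add: sum.If_cases Int_def)
  moreover have "(\<Sum>u\<in>set ?s. g u) = 2 * int (nbr_count E v (set R))"
    unfolding g_def by simp
  moreover have "(\<Sum>u\<in>set ?s. \<bar>signed_imbalance E ?t u\<bar> + h u)
      \<le> (\<Sum>u\<in>set ?s. \<bar>signed_imbalance E ?s u\<bar> + g u)"
    using pointwise by (rule sum_mono)
  moreover have "set ?t = set ?s" by auto
  ultimately have "int (ordering_imbalance E ?t) \<le> int (ordering_imbalance E ?s)"
    unfolding ordering_imbalance_eq_sum_abs by (simp add: sum.distrib)
  then show ?thesis by simp
qed

lemma ordering_imbalance_move_after_block: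
  assumes "distinct (B @ v # R @ A)" and "symp E"
    and "\<forall>x\<in>set R. E x v \<longrightarrow> signed_imbalance E (B @ v # R @ A) x \<ge> 2"
  shows "ordering_imbalance E (B @ R @ v # A) \<le> ordering_imbalance E (B @ v # R @ A)"
proof -
  have "distinct (rev A @ rev R @ v # rev B)"
    using assms(1) by auto
  then have "ordering_imbalance E (rev A @ v # rev R @ rev B) \<le> ordering_imbalance E (rev A @ rev R @ v # rev B)"
    using assms(2,3) signed_imbalance_rev[of E "B @ v # R @ A"]
    by (intro ordering_imbalance_move_before_block) auto
  then show ?thesis
    using ordering_imbalance_rev[of E "B @ R @ v # A"] ordering_imbalance_rev[of E "B @ v # R @ A"]
    by simp
qed

section \<open>Making a set of true twins consecutive\<close>

definition true_twins :: "('a \<Rightarrow> 'a \<Rightarrow> bool) \<Rightarrow> 'a set \<Rightarrow> bool" where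
  "true_twins E X \<longleftrightarrow>
     (\<forall>x\<in>X. \<forall>y\<in>X. x \<noteq> y \<longrightarrow> E x y \<and> (\<forall>u. u \<noteq> x \<longrightarrow> u \<noteq> y \<longrightarrow> (E x u \<longleftrightarrow> E y u)))"

lemma true_twins_subset: "true_twins E X \<Longrightarrow> Y \<subseteq> X \<Longrightarrow> true_twins E Y"
  unfolding true_twins_def by blast

lemma signed_imbalance_twins:
  assumes dist: "distinct (P @ x # M @ y # Q)" and twins: "true_twins E {x, y}"
  shows "signed_imbalance E (P @ x # M @ y # Q) y
      = signed_imbalance E (P @ x # M @ y # Q) x + 2 + 2 * int (nbr_count E x (set M))"
proof -
  let ?s = "P @ x # M @ y # Q"
  have "x \<noteq> y" "y \<noteq> x" using dist by auto
  then have "E x y" "E y x" and twin_nbrs: "\<forall>u. u \<noteq> x \<longrightarrow> u \<noteq> y \<longrightarrow> (E x u \<longleftrightarrow> E y u)"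
    using twins unfolding true_twins_def by (meson insertI1 insertI2 singletonI)+
  have same: "nbr_count E x T = nbr_count E y T" if "x \<notin> T" "y \<notin> T" for T
    using twin_nbrs that by (metis nbr_count_cong)
  have "signed_imbalance E ?s x
      = int (nbr_count E x (set P)) - int (nbr_count E x (insert y (set M \<union> set Q)))"
    using signed_imbalance_split[of P x "M @ y # Q" E] dist by simp
  also have "\<dots> = int (nbr_count E x (set P)) - 1 - int (nbr_count E x (set M)) - int (nbr_count E x (set Q))"
    using dist \<open>E x y\<close> nbr_count_insert[of "set M \<union> set Q" y E x] nbr_count_Un[of "set M" "set Q" E x]
    by simp
  finally have sx: "signed_imbalance E ?s x = \<dots>" .
  have "signed_imbalance E ?s y
      = int (nbr_count E y (insert x (set P \<union> set M))) - int (nbr_count E y (set Q))"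
    using signed_imbalance_split[of "P @ x # M" y Q E] dist by simp
  also have "\<dots> = 1 + int (nbr_count E y (set P)) + int (nbr_count E y (set M)) - int (nbr_count E y (set Q))"
    using dist \<open>E y x\<close> nbr_count_insert[of "set P \<union> set M" x E y] nbr_count_Un[of "set P" "set M" E y]
    by (simp add: Int_Un_distrib)
  finally show ?thesis
    using sx dist same[of "set P"] same[of "set M"] same[of "set Q"] by simp
qed

lemma signed_imbalance_twins_across_neighbour:
  assumes dist: "distinct s" and twins: "true_twins E {x, y}"
    and "precedes s x v" "precedes s v y" "E x v"
  shows "signed_imbalance E s y \<ge> signed_imbalance E s x + 4"
proof -
  obtain P M Q where s: "s = P @ x # M @ y # Q"
    using precedes_split[OF precedes_trans[OF dist assms(3,4)]] by blast
  have "v \<in> set M"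
    using precedes_between[of P x M y Q v] dist assms(3,4) unfolding s by blast
  then have "nbr_count E x (set M) \<noteq> 0"
    using \<open>E x v\<close> unfolding nbr_count_def by auto
  then show ?thesis
    using signed_imbalance_twins[of P x M y Q E] dist twins unfolding s by simp
qed

definition gap_vertices :: "'a list \<Rightarrow> 'a set \<Rightarrow> 'a set" where
  "gap_vertices s X = {w \<in> set s. w \<notin> X \<and> (\<exists>x\<in>X. precedes s x w) \<and> (\<exists>y\<in>X. precedes s w y)}"

lemma finite_gap_vertices: "finite (gap_vertices s X)"
  unfolding gap_vertices_def by simp

lemma gap_vertices_rev: "gap_vertices (rev s) X = gap_vertices s X"
  unfolding gap_vertices_def by (auto simp: precedes_rev)

lemma split_first_block:
  obtains A R Z where "s = A @ R @ Z" "set A \<inter> X = {}" "set R \<subseteq> X" "Z \<noteq> [] \<longrightarrow> hd Z \<notin> X"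
    "set s \<inter> X \<noteq> {} \<longrightarrow> R \<noteq> []"
proof
  let ?rest = "dropWhile (\<lambda>u. u \<notin> X) s"
  show "s = takeWhile (\<lambda>u. u \<notin> X) s @ takeWhile (\<lambda>u. u \<in> X) ?rest @ dropWhile (\<lambda>u. u \<in> X) ?rest"
    by simp
  show "set (takeWhile (\<lambda>u. u \<notin> X) s) \<inter> X = {}" "set (takeWhile (\<lambda>u. u \<in> X) ?rest) \<subseteq> X"
    by (auto dest: set_takeWhileD)
  show "dropWhile (\<lambda>u. u \<in> X) ?rest \<noteq> [] \<longrightarrow> hd (dropWhile (\<lambda>u. u \<in> X) ?rest) \<notin> X"
    using hd_dropWhile by metis
  show "set s \<inter> X \<noteq> {} \<longrightarrow> takeWhile (\<lambda>u. u \<in> X) ?rest \<noteq> []"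
  proof
    assume "set s \<inter> X \<noteq> {}"
    then have "?rest \<noteq> []" and "hd ?rest \<in> X"
      using hd_dropWhile[of "\<lambda>u. u \<notin> X" s] by (auto simp: dropWhile_eq_Nil_conv)
    then show "takeWhile (\<lambda>u. u \<in> X) ?rest \<noteq> []"
      by (metis takeWhile_eq_Nil_iff)
  qed
qed

lemma consecutive_in_if_no_gap_vertices:
  assumes "X \<subseteq> set s" and no_gap: "gap_vertices s X = {}"
  shows "consecutive_in s X"
proof (cases "X = {}")
  case True
  then show ?thesis unfolding consecutive_in_def by (metis append.left_neutral empty_set)
next
  case False
  obtain A R Z where s: "s = A @ R @ Z" and A: "set A \<inter> X = {}" and R: "set R \<subseteq> X"
    and Z: "Z \<noteq> [] \<longrightarrow> hd Z \<notin> X" and R_ne: "set s \<inter> X \<noteq> {} \<longrightarrow> R \<noteq> []"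
    by (rule split_first_block)
  obtain r where r: "r \<in> set R" using R_ne False \<open>X \<subseteq> set s\<close> by (cases R) auto
  have "set Z \<inter> X = {}"
  proof (rule ccontr)
    assume "set Z \<inter> X \<noteq> {}"
    then obtain v B z where "Z = v # B" "z \<in> set B" "z \<in> X" "v \<notin> X"
      using Z by (cases Z) auto
    then have "v \<in> gap_vertices s X"
      using r R unfolding gap_vertices_def s by (auto simp: precedes_append precedes_Cons)
    then show False using no_gap by simp
  qed
  then have "set R = X" using s A R \<open>X \<subseteq> set s\<close> by auto
  then show ?thesis unfolding consecutive_in_def s by blast
qed

lemma first_gap_split:
  assumes dist: "distinct s" and "gap_vertices s X \<noteq> {}"
  obtains A R v B where "s = A @ R @ v # B" "set A \<inter> X = {}" "R \<noteq> []" "set R \<subseteq> X" "v \<notin> X"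
    "set B \<inter> X \<noteq> {}"
proof -
  obtain w x y where w: "w \<notin> X" "x \<in> X" "y \<in> X" "precedes s x w" "precedes s w y"
    using assms(2) unfolding gap_vertices_def by blast
  obtain A R Z where s: "s = A @ R @ Z" and A: "set A \<inter> X = {}" and R: "set R \<subseteq> X"
    and Z: "Z \<noteq> [] \<longrightarrow> hd Z \<notin> X" and R_ne: "set s \<inter> X \<noteq> {} \<longrightarrow> R \<noteq> []"
    by (rule split_first_block)
  have "precedes (R @ Z) x w"
    using w A unfolding s by (auto simp: precedes_append dest: precedes_in_set)
  from precedes_in_set[OF this] have "w \<in> set Z"
    using w R by auto
  then obtain v B where Z_eq: "Z = v # B"
    by (cases Z) auto
  have "precedes Z w y"
    using w \<open>w \<in> set Z\<close> dist R unfolding s by (auto simp: precedes_append dest: precedes_in_set)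
  then have "y \<in> set B"
    using \<open>w \<in> set Z\<close> dist unfolding s Z_eq by (auto simp: precedes_Cons dest: precedes_in_set)
  moreover have "R \<noteq> []"
    using R_ne precedes_in_set[OF \<open>precedes s x w\<close>] \<open>x \<in> X\<close> by blast
  ultimately show ?thesis
    using that[of A R v B] s A R Z \<open>y \<in> X\<close> unfolding Z_eq by auto
qed

lemma last_gap_split:
  assumes "distinct s" and "gap_vertices s X \<noteq> {}"
  obtains B v R A where "s = B @ v # R @ A" "set A \<inter> X = {}" "R \<noteq> []" "set R \<subseteq> X" "v \<notin> X"
    "set B \<inter> X \<noteq> {}"
proof -
  have "distinct (rev s)" "gap_vertices (rev s) X \<noteq> {}"
    using assms by (simp_all add: gap_vertices_rev)
  then obtain A R v B where "rev s = A @ R @ v # B" "set A \<inter> X = {}" "R \<noteq> []" "set R \<subseteq> X" "v \<notin> X"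
    "set B \<inter> X \<noteq> {}"
    by (rule first_gap_split)
  then show ?thesis
    using that[of "rev B" v "rev R" "rev A"] by (simp add: rev_swap)
qed

lemma gap_vertices_move_before_block:
  assumes dist: "distinct (A @ R @ v # B)" and "set A \<inter> X = {}" "R \<noteq> []" "set R \<subseteq> X" "v \<notin> X"
    "set B \<inter> X \<noteq> {}"
  shows "gap_vertices (A @ v # R @ B) X \<subset> gap_vertices (A @ R @ v # B) X"
proof
  show "gap_vertices (A @ v # R @ B) X \<subseteq> gap_vertices (A @ R @ v # B) X"
    using assms unfolding gap_vertices_def
    by (auto simp: precedes_append precedes_Cons dest: precedes_in_set)
  obtain r where "r \<in> set R" using \<open>R \<noteq> []\<close> by (cases R) auto
  then have "v \<in> gap_vertices (A @ R @ v # B) X"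
    using assms unfolding gap_vertices_def by (auto simp: precedes_append precedes_Cons)
  moreover have "v \<notin> gap_vertices (A @ v # R @ B) X"
    using assms unfolding gap_vertices_def by (auto simp: precedes_append precedes_Cons dest: precedes_in_set)
  ultimately show "gap_vertices (A @ v # R @ B) X \<noteq> gap_vertices (A @ R @ v # B) X"
    by blast
qed

lemma gap_vertices_move_after_block:
  assumes "distinct (B @ v # R @ A)" and "set A \<inter> X = {}" "R \<noteq> []" "set R \<subseteq> X" "v \<notin> X"
    "set B \<inter> X \<noteq> {}"
  shows "gap_vertices (B @ R @ v # A) X \<subset> gap_vertices (B @ v # R @ A) X"
proof -
  have "distinct (rev A @ rev R @ v # rev B)"
    using assms(1) by auto
  then have "gap_vertices (rev A @ v # rev R @ rev B) X \<subset> gap_vertices (rev A @ rev R @ v # rev B) X"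
    using assms(2-) by (intro gap_vertices_move_before_block) auto
  then show ?thesis
    using gap_vertices_rev[of "B @ R @ v # A" X] gap_vertices_rev[of "B @ v # R @ A" X] by simp
qed

lemma twin_last_block_heavy:
  assumes dist: "distinct s" and twins: "true_twins E X"
    and first: "s = A @ R @ v # B" "set R \<subseteq> X" "v \<notin> X" "set B \<inter> X \<noteq> {}"
    and last: "s = B' @ v' # R' @ A'" "set R' \<subseteq> X" "set A' \<inter> X = {}"
    and x: "x \<in> set R" "E x v" "signed_imbalance E s x \<ge> -1"
    and y: "y \<in> set R'"
  shows "signed_imbalance E s y \<ge> 3"
proof -
  obtain z where z: "z \<in> set B" "z \<in> X" using first(4) by blast
  have "precedes s v z"
    using z unfolding first(1) by (simp add: precedes_append precedes_Cons)
  then have "v \<notin> set A'"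
    using dist z last(3) unfolding last(1) by (auto simp: precedes_append precedes_Cons dest: precedes_in_set)
  moreover have "v \<in> set s" "v \<notin> set R'"
    using first(3) last(2) unfolding first(1) by auto
  ultimately have "precedes s v y"
    using y unfolding last(1) by (auto simp: precedes_append precedes_Cons)
  moreover have "precedes s x v"
    using x(1) unfolding first(1) by (simp add: precedes_append precedes_Cons)
  moreover have "true_twins E {x, y}"
    using twins first(2) last(2) x(1) y by (auto intro: true_twins_subset)
  ultimately show ?thesis
    using signed_imbalance_twins_across_neighbour[OF dist] x by fastforce
qed

lemma exists_gap_reducing_move:
  assumes sym: "symp E" and twins: "true_twins E X"
    and dist: "distinct s" and gap: "gap_vertices s X \<noteq> {}"
  obtains t where "distinct t" "set t = set s" "ordering_imbalance E t \<le> ordering_imbalance E s"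
    "filter (\<lambda>u. u \<notin> X) t = filter (\<lambda>u. u \<notin> X) s" "gap_vertices t X \<subset> gap_vertices s X"
proof -
  obtain A R v B where s: "s = A @ R @ v # B" and first: "set A \<inter> X = {}" "R \<noteq> []"
    "set R \<subseteq> X" "v \<notin> X" "set B \<inter> X \<noteq> {}"
    using first_gap_split[OF dist gap] by blast
  obtain B' v' R' A' where s': "s = B' @ v' # R' @ A'" and last: "set A' \<inter> X = {}" "R' \<noteq> []"
    "set R' \<subseteq> X" "v' \<notin> X" "set B' \<inter> X \<noteq> {}"
    using last_gap_split[OF dist gap] by blast
  have filter_R: "filter (\<lambda>u. u \<notin> X) R = []" "filter (\<lambda>u. u \<notin> X) R' = []"
    using first(3) last(3) by (auto simp: filter_empty_conv)
  show ?thesis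
  proof (cases "\<forall>x\<in>set R. E x v \<longrightarrow> signed_imbalance E s x \<le> -2")
    case True
    show ?thesis
    proof (rule that)
      show "ordering_imbalance E (A @ v # R @ B) \<le> ordering_imbalance E s"
        using ordering_imbalance_move_before_block[of A R v B E] dist sym True unfolding s by blast
      show "gap_vertices (A @ v # R @ B) X \<subset> gap_vertices s X"
        using gap_vertices_move_before_block[of A R v B X] dist first unfolding s by blast
    qed (use dist filter_R in \<open>auto simp: s\<close>)
  next
    case False
    then obtain x where "x \<in> set R" "E x v" "signed_imbalance E s x \<ge> -1"
      by force
    then have "signed_imbalance E s y \<ge> 3" if "y \<in> set R'" for y
      using twin_last_block_heavy[OF dist twins s first(3-5) s' last(3,1)] that by blast
    then have heavy: "\<forall>y\<in>set R'. E y v' \<longrightarrow> signed_imbalance E s y \<ge> 2"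
      by force
    show ?thesis
    proof (rule that)
      show "ordering_imbalance E (B' @ R' @ v' # A') \<le> ordering_imbalance E s"
        using ordering_imbalance_move_after_block[of B' v' R' A' E] dist sym heavy unfolding s' by blast
      show "gap_vertices (B' @ R' @ v' # A') X \<subset> gap_vertices s X"
        using gap_vertices_move_after_block[of B' v' R' A' X] dist last unfolding s' by blast
    qed (use dist filter_R in \<open>auto simp: s'\<close>)
  qed
qed

lemma ordering_make_twins_consecutive:
  assumes sym: "symp E" and twins: "true_twins E X"
  shows "distinct s \<Longrightarrow> X \<subseteq> set s \<Longrightarrow>
    \<exists>t. distinct t \<and> set t = set s \<and> ordering_imbalance E t \<le> ordering_imbalance E s
      \<and> filter (\<lambda>u. u \<notin> X) t = filter (\<lambda>u. u \<notin> X) s \<and> consecutive_in t X"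
proof (induction "card (gap_vertices s X)" arbitrary: s rule: less_induct)
  case less
  show ?case
  proof (cases "gap_vertices s X = {}")
    case True
    then show ?thesis
      using less.prems consecutive_in_if_no_gap_vertices[of X s] by (intro exI[of _ s]) auto
  next
    case False
    obtain t where t: "distinct t" "set t = set s" "ordering_imbalance E t \<le> ordering_imbalance E s"
      "filter (\<lambda>u. u \<notin> X) t = filter (\<lambda>u. u \<notin> X) s" "gap_vertices t X \<subset> gap_vertices s X"
      using exists_gap_reducing_move[OF sym twins less.prems(1) False] by blast
    have "card (gap_vertices t X) < card (gap_vertices s X)"
      using t(5) by (simp add: psubset_card_mono finite_gap_vertices)
    moreover have "X \<subseteq> set t"
      using less.prems(2) t(2) by simp
    ultimately obtain t' where "distinct t'" "set t' = set t"
      "ordering_imbalance E t' \<le> ordering_imbalance E t"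
      "filter (\<lambda>u. u \<notin> X) t' = filter (\<lambda>u. u \<notin> X) t" "consecutive_in t' X"
      using less.hyps[of t] t(1) by blast
    with t show ?thesis
      by (intro exI[of _ t']) auto
  qed
qed

section \<open>Components of a twin cover\<close>

lemma component_subset: "component_of W E C \<Longrightarrow> C \<subseteq> W"
proof -
  assume "component_of W E C"
  then obtain v where "v \<in> W" and C: "C = {w. (\<lambda>x y. x \<in> W \<and> y \<in> W \<and> E x y)\<^sup>*\<^sup>* v w}"
    unfolding component_of_def by blast
  have "w \<in> W" if "(\<lambda>x y. x \<in> W \<and> y \<in> W \<and> E x y)\<^sup>*\<^sup>* v w" for w
    using that \<open>v \<in> W\<close> by (induction rule: rtranclp_induct) auto
  then show "C \<subseteq> W" unfolding C by blast
qed

lemma finite_components: "finite W \<Longrightarrow> finite {C. component_of W E C}"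
  by (rule finite_subset[of _ "Pow W"]) (auto dest: component_subset)

lemma component_closed:
  assumes "component_of W E C" "x \<in> C" "y \<in> W" "E x y"
  shows "y \<in> C"
proof -
  obtain v where C: "C = {w. (\<lambda>x y. x \<in> W \<and> y \<in> W \<and> E x y)\<^sup>*\<^sup>* v w}"
    using assms(1) unfolding component_of_def by blast
  have "x \<in> W" using component_subset assms(1,2) by blast
  then show ?thesis
    using assms(2-4) unfolding C by (auto intro: rtranclp.rtrancl_into_rtrancl)
qed

lemma component_eq_if_meet:
  assumes "symp E" "component_of W E C" "component_of W E C'" "x \<in> C" "x \<in> C'"
  shows "C = C'"
proof -
  let ?r = "\<lambda>x y. x \<in> W \<and> y \<in> W \<and> E x y"
  have sym: "symp ?r\<^sup>*\<^sup>*"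
    using assms(1) by (intro symp_rtranclp) (auto simp: symp_def)
  obtain v v' where C: "C = {w. ?r\<^sup>*\<^sup>* v w}" and C': "C' = {w. ?r\<^sup>*\<^sup>* v' w}"
    using assms(2,3) unfolding component_of_def by blast
  have "?r\<^sup>*\<^sup>* v v'"
    using assms(4,5) sympD[OF sym] unfolding C C' by (blast intro: rtranclp_trans)
  then show ?thesis
    unfolding C C' using sympD[OF sym] by (blast intro: rtranclp_trans)
qed

lemma graph_symp: "graph V E \<Longrightarrow> symp E"
  unfolding graph_def symp_def by blast

lemma twin_cover_component_true_twins:
  assumes "graph V E" "twin_cover V E S" "component_of (V - S) E X"
  shows "true_twins E X"
  unfolding true_twins_def
proof (intro ballI impI)
  fix x y assume "x \<in> X" "y \<in> X" "x \<noteq> y"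
  then have N: "closed_nbhd V E x = closed_nbhd V E y"
    using assms(2,3) unfolding twin_cover_def by blast
  have nbhd_iff: "u \<in> closed_nbhd V E w \<longleftrightarrow> u = w \<or> E w u" for u w
    using assms(1) unfolding closed_nbhd_def graph_def by blast
  show "E x y \<and> (\<forall>u. u \<noteq> x \<longrightarrow> u \<noteq> y \<longrightarrow> (E x u \<longleftrightarrow> E y u))"
    using N nbhd_iff[of y x] nbhd_iff[of y y] \<open>x \<noteq> y\<close> by (metis nbhd_iff)
qed

lemma twin_cover_component_outside_nbr:
  assumes "graph V E" "component_of (V - S) E X" "x \<in> X" "E x u" "u \<notin> X"
  shows "u \<in> S"
  using component_closed[OF assms(2,3) _ assms(4)] assms(1,4,5) unfolding graph_def by blast

lemma ordering_imbalance_slide_component_block: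
  assumes G: "graph V E" and X: "component_of (V - S) E X"
    and ys: "set ys \<inter> (S \<union> X) = {}" and Xb: "set Xb = X"
  shows "ordering_imbalance E (L @ Xb @ ys @ R) = ordering_imbalance E (L @ ys @ Xb @ R)"
proof -
  have "\<not> E q p" if p: "p \<in> set ys" and q: "q \<in> set Xb" for p q
  proof
    assume "E q p"
    moreover have "q \<in> X" "p \<notin> X" using p q ys Xb by auto
    ultimately have "p \<in> S"
      using twin_cover_component_outside_nbr[OF G X] by blast
    then show False using p ys by auto
  qed
  then have "\<forall>p\<in>set ys. \<forall>q\<in>set Xb. \<not> E p q \<and> \<not> E q p"
    using graph_symp[OF G] by (auto dest: sympD)
  then show ?thesis
    by (rule ordering_imbalance_swap_nonadjacent)
qed

lemma ordering_component_block_after_cover_vertex: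
  assumes G: "graph V E" and tc: "twin_cover V E S" and X: "component_of (V - S) E X"
    and \<sigma>: "is_ordering V \<sigma>"
  obtains L Xb R where "is_ordering V (L @ Xb @ R)" "set Xb = X"
    "ordering_imbalance E (L @ Xb @ R) \<le> ordering_imbalance E \<sigma>"
    "filter (\<lambda>u. u \<notin> X) \<sigma> = L @ R" "L \<noteq> [] \<longrightarrow> last L \<in> S"
proof -
  have dist: "distinct \<sigma>" and set_\<sigma>: "set \<sigma> = V"
    using \<sigma> unfolding is_ordering_def by auto
  have X_sub: "X \<subseteq> set \<sigma>" using component_subset[OF X] set_\<sigma> by blast
  obtain t where t: "distinct t" "set t = set \<sigma>" "ordering_imbalance E t \<le> ordering_imbalance E \<sigma>"
    "filter (\<lambda>u. u \<notin> X) t = filter (\<lambda>u. u \<notin> X) \<sigma>" "consecutive_in t X"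
    using ordering_make_twins_consecutive[OF graph_symp[OF G] twin_cover_component_true_twins[OF G tc X]
        dist X_sub]
    by blast
  obtain xs Xb zs where t_eq: "t = xs @ Xb @ zs" and Xb: "set Xb = X"
    using t(5) unfolding consecutive_in_def by auto
  obtain xs' ys where xs: "xs = xs' @ ys" and ys: "set ys \<inter> S = {}"
    and last_xs': "xs' \<noteq> [] \<longrightarrow> last xs' \<in> S"
    using split_after_last_member[of xs S] by auto
  have outside_X: "set xs \<inter> X = {}" "set zs \<inter> X = {}"
    using t(1) Xb unfolding t_eq by auto
  show ?thesis
  proof (rule that[of xs' Xb "ys @ zs"])
    have "set ys \<inter> (S \<union> X) = {}"
      using ys outside_X unfolding xs by auto
    from ordering_imbalance_slide_component_block[OF G X this Xb]
    show "ordering_imbalance E (xs' @ Xb @ ys @ zs) \<le> ordering_imbalance E \<sigma>"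
      using t(3) unfolding t_eq xs by simp
    show "is_ordering V (xs' @ Xb @ ys @ zs)"
      using t(1,2) set_\<sigma> unfolding t_eq xs is_ordering_def by auto
    have "filter (\<lambda>u. u \<notin> X) Xb = []" using Xb by (auto simp: filter_empty_conv)
    moreover have "filter (\<lambda>u. u \<notin> X) xs = xs" "filter (\<lambda>u. u \<notin> X) zs = zs"
      using outside_X by (auto simp: filter_id_conv)
    ultimately have "filter (\<lambda>u. u \<notin> X) \<sigma> = xs @ zs" using t(4) unfolding t_eq by simp
    then show "filter (\<lambda>u. u \<notin> X) \<sigma> = xs' @ ys @ zs" unfolding xs by simp
  qed (use Xb last_xs' in auto)
qed

lemma ordering_make_component_consecutive:
  assumes G: "graph V E" and tc: "twin_cover V E S" and X: "component_of (V - S) E X"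
    and DD: "\<forall>Y\<in>DD. component_of (V - S) E Y" "X \<notin> DD"
    and \<sigma>: "is_ordering V \<sigma>" "\<forall>C\<in>DD. consecutive_in \<sigma> C"
  shows "\<exists>\<tau>. is_ordering V \<tau> \<and> ordering_imbalance E \<tau> \<le> ordering_imbalance E \<sigma>
    \<and> (\<forall>C\<in>insert X DD. consecutive_in \<tau> C)"
proof -
  obtain L Xb R where \<tau>: "is_ordering V (L @ Xb @ R)" "set Xb = X"
    "ordering_imbalance E (L @ Xb @ R) \<le> ordering_imbalance E \<sigma>"
    "filter (\<lambda>u. u \<notin> X) \<sigma> = L @ R" "L \<noteq> [] \<longrightarrow> last L \<in> S"
    using ordering_component_block_after_cover_vertex[OF G tc X \<sigma>(1)] by blast
  have "consecutive_in (L @ Xb @ R) Y" if Y_in: "Y \<in> DD" for Y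
  proof -
    have Y: "component_of (V - S) E Y" "Y \<noteq> X" using DD Y_in by auto
    then have "Y \<inter> X = {}" "Y \<inter> S = {}"
      using component_eq_if_meet[OF graph_symp[OF G] Y(1) X] component_subset[OF Y(1)] by auto
    then have "consecutive_in (L @ R) Y"
      using consecutive_in_filter[of \<sigma> Y X] \<sigma>(2) Y_in \<tau>(4) by simp
    then show ?thesis
      using consecutive_in_insert[of L R Y Xb] \<tau>(5) \<open>Y \<inter> S = {}\<close> by auto
  qed
  moreover have "consecutive_in (L @ Xb @ R) X"
    unfolding consecutive_in_def using \<tau>(2) by blast
  ultimately show ?thesis
    using \<tau>(1,3) by (intro exI[of _ "L @ Xb @ R"]) auto
qed

lemma ordering_make_components_consecutive:
  assumes G: "graph V E" and tc: "twin_cover V E S" and \<sigma>: "is_ordering V \<sigma>"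
  shows "finite DD \<Longrightarrow> \<forall>Y\<in>DD. component_of (V - S) E Y \<Longrightarrow>
    \<exists>\<tau>. is_ordering V \<tau> \<and> ordering_imbalance E \<tau> \<le> ordering_imbalance E \<sigma> \<and> (\<forall>C\<in>DD. consecutive_in \<tau> C)"
proof (induction DD rule: finite_induct)
  case empty
  then show ?case using \<sigma> by blast
next
  case (insert X DD)
  then obtain \<tau> where "is_ordering V \<tau>" "ordering_imbalance E \<tau> \<le> ordering_imbalance E \<sigma>"
    "\<forall>C\<in>DD. consecutive_in \<tau> C"
    by blast
  with ordering_make_component_consecutive[OF G tc, of X DD \<tau>] insert.hyps(2) insert.prems
  show ?case by fastforce
qed

lemma finite_orderings: "finite V \<Longrightarrow> finite {\<sigma>. is_ordering V \<sigma>}"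
  by (rule finite_subset[OF _ finite_subset_distinct]) (auto simp: is_ordering_def)

lemma graph_imbalance_le:
  assumes "finite V" "is_ordering V \<sigma>"
  shows "graph_imbalance V E \<le> ordering_imbalance E \<sigma>"
proof -
  from finite_orderings[OF assms(1)] show ?thesis
    unfolding graph_imbalance_def using assms(2) by (auto intro: Min_le)
qed

lemma imbalance_optimal_exists:
  assumes "finite V"
  shows "\<exists>\<sigma>. imbalance_optimal V E \<sigma>"
proof -
  have "{\<sigma>. is_ordering V \<sigma>} \<noteq> {}"
    using finite_distinct_list[OF assms] unfolding is_ordering_def by auto
  then have "graph_imbalance V E \<in> {ordering_imbalance E \<sigma> | \<sigma>. is_ordering V \<sigma>}"
    unfolding graph_imbalance_def using finite_orderings[OF assms] by (intro Min_in) auto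
  then show ?thesis
    unfolding imbalance_optimal_def by auto
qed

theorem corollary1:
  fixes V :: "'a set" and E :: "'a \<Rightarrow> 'a \<Rightarrow> bool" and S :: "'a set"
  assumes "graph V E"
    and "twin_cover V E S"
  shows "\<exists>\<sigma>. imbalance_optimal V E \<sigma> \<and>
           (\<forall>C. component_of (V - S) E C \<longrightarrow> consecutive_in \<sigma> C)"
proof -
  have "finite V" using assms(1) unfolding graph_def by blast
  obtain \<sigma> where \<sigma>: "imbalance_optimal V E \<sigma>"
    using imbalance_optimal_exists[OF \<open>finite V\<close>] by blast
  have "finite {C. component_of (V - S) E C}"
    using \<open>finite V\<close> by (simp add: finite_components)
  then obtain \<tau> where \<tau>: "is_ordering V \<tau>" "ordering_imbalance E \<tau> \<le> ordering_imbalance E \<sigma>"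
    "\<forall>C\<in>{C. component_of (V - S) E C}. consecutive_in \<tau> C"
    using ordering_make_components_consecutive[OF assms] \<sigma> unfolding imbalance_optimal_def by blast
  then have "imbalance_optimal V E \<tau>"
    using \<sigma> graph_imbalance_le[OF \<open>finite V\<close> \<tau>(1), of E] unfolding imbalance_optimal_def by simp
  then show ?thesis using \<tau>(3) by blast
qed

end
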